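(* Let $\Omega\subset\mathbb{R}^d$ with $\rho(x,y)=\|x-y\|_2$ and $\operatorname{diam}(\Omega)\le D$. Then for every $n\ge1$, $$G_n(\mathcal{F}_{BL})\le\begin{cases}\dfrac{9\sqrt{\log(2\sqrt n)}\,D}{\sqrt n}, & d=1,\\[2mm] \dfrac{10D\log(2\sqrt n)^{3/2}}{\sqrt n}, & d=2,\\[2mm] \dfrac{10D\sqrt{\log\big(2n^{1/d}(d/2-1)^{2/d}\big)}}{n^{1/d}(d/2-1)^{2/d}}, & d\ge3.\end{cases}$$
   Context: $\mathcal{F}_{BL}=\{f:\Omega\to\mathbb{R}:\|f\|_\infty\le\operatorname{diam}(\Omega),\ |f(z_1)-f(z_2)|\le\|z_1-z_2\|_2\ \forall z_1,z_2\}$. The Gaussian complexity is $G_n(\mathcal{F})=\sup_{z_1,\dots,z_n\in\Omega}\mathbb{E}_{x_i\overset{iid}{\sim}\mathcal{N}(0,1)}\big[\sup_{f\in\mathcal{F}}\frac1n|\sum_i x_if(z_i)|\big]$. *)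

theory Defs
  imports "HOL-Probability.Probability"
begin

definition F_BL :: "'a::euclidean_space set \<Rightarrow> ('a \<Rightarrow> real) set" where
  "F_BL \<Omega> = {f. (\<forall>z\<in>\<Omega>. \<bar>f z\<bar> \<le> diameter \<Omega>) \<and>
                  (\<forall>z1\<in>\<Omega>. \<forall>z2\<in>\<Omega>. \<bar>f z1 - f z2\<bar> \<le> dist z1 z2)}"

definition gauss_vec :: "nat \<Rightarrow> (nat \<Rightarrow> real) measure" where
  "gauss_vec n = PiM {..<n} (\<lambda>_. density lborel std_normal_density)"

definition gaussian_complexity :: "nat \<Rightarrow> ('a \<Rightarrow> real) set \<Rightarrow> 'a set \<Rightarrow> ennreal" where
  "gaussian_complexity n F \<Omega> =
     (SUP z \<in> {..<n} \<rightarrow>\<^sub>E \<Omega>.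
        \<integral>\<^sup>+ x. (SUP f\<in>F. ennreal (\<bar>\<Sum>i<n. x i * f (z i)\<bar> / real n)) \<partial>gauss_vec n)"

end

theory Submission
  imports Defs
begin

text \<open>Chaining over dyadic nets. Fix the sample points \<open>z\<^sub>i\<close> and project them successively onto
  nets of \<open>\<Omega>\<close> at scales \<open>D 2\<^sup>-\<^sup>k\<close>; a volume argument bounds the \<open>k\<close>-th net by
  \<open>(1 + 2\<^sup>k\<^sup>+\<^sup>1)\<^sup>d\<close> points. Telescoping \<open>f(z\<^sub>i)\<close> along the chain, every link is at most
  \<open>D 2\<^sup>-\<^sup>k\<close> by the Lipschitz property and depends only on the net point, so
  \<open>\<bar>\<Sum> x\<^sub>i f(z\<^sub>i)\<bar>\<close> is dominated, uniformly over the class, by weighted sums of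
  \<open>\<bar>\<Sum>\<^sub>i\<^sub>\<in>\<^sub>B x\<^sub>i\<bar>\<close> over the blocks \<open>B\<close> of a partition. Such a block sum has
  expectation at most \<open>sqrt |B|\<close>, and Cauchy-Schwarz bounds a level by \<open>sqrt (|N\<^sub>k| n)\<close>.
  Choosing the depth logarithmically in the effective scale \<open>n\<^sup>1\<^sup>/\<^sup>d\<close> gives the three rates;
  the trivial bound \<open>D\<close> covers the small cases.\<close>

abbreviation std_normal_measure :: "real measure" where
  "std_normal_measure \<equiv> density lborel std_normal_density"

lemma std_normal_first_moment:
  "integrable std_normal_measure (\<lambda>t. t) \<and> integral\<^sup>L std_normal_measure (\<lambda>t. t) = 0"
proof -
  have "integrable lborel (\<lambda>x. std_normal_density x * x ^ 1)"
    by (rule integrable_std_normal_moment)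
  moreover have "integral\<^sup>L lborel (\<lambda>x. std_normal_density x * x ^ (2 * 0 + 1)) = 0"
    by (rule integral_std_normal_moment_odd)
  ultimately show ?thesis
    by (simp add: integrable_density integral_density normal_density_nonneg)
qed

lemma std_normal_second_moment:
  "integrable std_normal_measure (\<lambda>t. t * t) \<and> integral\<^sup>L std_normal_measure (\<lambda>t. t * t) = 1"
proof -
  have "integrable lborel (\<lambda>x. std_normal_density x * x ^ 2)"
    by (rule integrable_std_normal_moment)
  moreover have "integral\<^sup>L lborel (\<lambda>x. std_normal_density x * x ^ (2 * 1)) = fact (2 * 1) / (2 ^ 1 * fact 1)"
    by (rule integral_std_normal_moment_even)
  ultimately show ?thesis
    by (simp add: integrable_density integral_density normal_density_nonneg power2_eq_square)
qed

lemma prob_space_std_normal_measure: "prob_space std_normal_measure"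
  by (simp add: prob_space_normal_density)

lemma prob_space_gauss_vec: "prob_space (gauss_vec n)"
  unfolding gauss_vec_def by (intro prob_space_PiM prob_space_std_normal_measure)

lemma gauss_vec_coord_products:
  assumes "i < n" "k < n"
  shows "integrable (gauss_vec n) (\<lambda>x. x i * x k)"
    and "integral\<^sup>L (gauss_vec n) (\<lambda>x. x i * x k) = (if i = k then 1 else 0)"
proof -
  interpret G: prob_space std_normal_measure by (rule prob_space_std_normal_measure)
  interpret P: product_prob_space "\<lambda>_::nat. std_normal_measure" "{..<n}" ..
  define f where "f j t = (if j = i then t else 1) * (if j = k then t else 1)" for j and t :: real
  have f_cases: "f j = (if j = i \<and> j = k then (\<lambda>t. t * t) else if j = i \<or> j = k then (\<lambda>t. t) else (\<lambda>t. 1))" for j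
    by (auto simp: f_def fun_eq_iff)
  have f_int: "integrable std_normal_measure (f j)" for j
    unfolding f_cases using std_normal_first_moment std_normal_second_moment by simp
  have prod_f: "(\<Prod>j<n. f j (x j)) = x i * x k" for x
    using assms by (simp add: f_def prod.distrib prod.delta)
  have "integrable (gauss_vec n) (\<lambda>x. \<Prod>j<n. f j (x j))"
    unfolding gauss_vec_def by (rule P.product_integrable_prod) (auto intro: f_int)
  then show "integrable (gauss_vec n) (\<lambda>x. x i * x k)" by (simp add: prod_f)
  have "integral\<^sup>L (gauss_vec n) (\<lambda>x. \<Prod>j<n. f j (x j)) = (\<Prod>j<n. integral\<^sup>L std_normal_measure (f j))"
    unfolding gauss_vec_def by (rule P.product_integral_prod) (auto intro: f_int)
  also have "\<dots> = (if i = k then 1 else 0)"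
  proof (cases "i = k")
    case True
    then show ?thesis using std_normal_second_moment G.prob_space by (simp add: f_cases if_distrib cong: if_cong)
  next
    case False
    then have "integral\<^sup>L std_normal_measure (f i) = 0" using std_normal_first_moment by (simp add: f_cases)
    then show ?thesis using False assms by (auto intro!: prod_zero)
  qed
  finally show "integral\<^sup>L (gauss_vec n) (\<lambda>x. x i * x k) = (if i = k then 1 else 0)" by (simp add: prod_f)
qed

lemma gauss_vec_sum_second_moment:
  assumes "I \<subseteq> {..<n}"
  shows "integrable (gauss_vec n) (\<lambda>x. (\<Sum>i\<in>I. x i)\<^sup>2)"
    and "integral\<^sup>L (gauss_vec n) (\<lambda>x. (\<Sum>i\<in>I. x i)\<^sup>2) = real (card I)"
proof -
  have fin: "finite I" using assms finite_subset by blast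
  have lt: "i \<in> I \<Longrightarrow> i < n" for i using assms by auto
  have sq: "(\<Sum>i\<in>I. x i)\<^sup>2 = (\<Sum>i\<in>I. \<Sum>k\<in>I. x i * x k)" for x :: "nat \<Rightarrow> real"
    unfolding power2_eq_square by (rule sum_product)
  show "integrable (gauss_vec n) (\<lambda>x. (\<Sum>i\<in>I. x i)\<^sup>2)"
    unfolding sq by (intro Bochner_Integration.integrable_sum gauss_vec_coord_products lt)
  have "integral\<^sup>L (gauss_vec n) (\<lambda>x. \<Sum>i\<in>I. \<Sum>k\<in>I. x i * x k)
      = (\<Sum>i\<in>I. \<Sum>k\<in>I. integral\<^sup>L (gauss_vec n) (\<lambda>x. x i * x k))"
    by (simp add: lt gauss_vec_coord_products Bochner_Integration.integrable_sum)
  also have "\<dots> = (\<Sum>i\<in>I. \<Sum>k\<in>I. if i = k then 1 else 0)"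
    by (simp add: lt gauss_vec_coord_products)
  finally show "integral\<^sup>L (gauss_vec n) (\<lambda>x. (\<Sum>i\<in>I. x i)\<^sup>2) = real (card I)"
    using fin by (simp add: sq)
qed

lemma borel_measurable_gauss_vec_sum:
  "I \<subseteq> {..<n} \<Longrightarrow> (\<lambda>x. \<Sum>i\<in>I. x i) \<in> borel_measurable (gauss_vec n)"
  unfolding gauss_vec_def by (auto intro!: borel_measurable_sum measurable_component_singleton)

lemma nn_integral_gauss_vec_abs_sum_le:
  assumes "I \<subseteq> {..<n}"
  shows "(\<integral>\<^sup>+x. ennreal \<bar>\<Sum>i\<in>I. x i\<bar> \<partial>gauss_vec n) \<le> ennreal (sqrt (card I))"
proof (cases "I = {}")
  case False
  interpret prob_space "gauss_vec n" by (rule prob_space_gauss_vec)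
  define a where "a = sqrt (card I)"
  have "finite I" using assms finite_subset by blast
  then have a: "a > 0" using False by (simp add: a_def card_gt_0_iff)
  \<comment> \<open>AM-GM with the right weight turns the second moment into a bound on the first.\<close>
  have am_gm: "\<bar>s\<bar> \<le> s\<^sup>2 / (2 * a) + a / 2" for s :: real
  proof -
    have "0 \<le> (\<bar>s\<bar> - a)\<^sup>2" by simp
    then show ?thesis using a by (simp add: field_simps power2_eq_square)
  qed
  note moment = gauss_vec_sum_second_moment[OF assms]
  have "(\<integral>\<^sup>+x. ennreal \<bar>\<Sum>i\<in>I. x i\<bar> \<partial>gauss_vec n)
      \<le> (\<integral>\<^sup>+x. ennreal ((\<Sum>i\<in>I. x i)\<^sup>2 / (2 * a) + a / 2) \<partial>gauss_vec n)"
    by (intro nn_integral_mono ennreal_leI am_gm)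
  also have "\<dots> = ennreal (real (card I) / (2 * a) + a / 2)"
    using moment a by (subst nn_integral_eq_integral) (auto simp: prob_space)
  also have "real (card I) / (2 * a) + a / 2 = a" using a by (simp add: a_def field_simps)
  finally show ?thesis by (simp add: a_def)
qed simp

lemma sum_sqrt_le_sqrt_card_mult_sum:
  fixes a :: "'b \<Rightarrow> real"
  assumes "\<And>p. p \<in> P \<Longrightarrow> a p \<ge> 0"
  shows "(\<Sum>p\<in>P. sqrt (a p)) \<le> sqrt (card P * (\<Sum>p\<in>P. a p))"
proof -
  have "(\<Sum>p\<in>P. sqrt (a p))\<^sup>2 \<le> (\<Sum>p\<in>P. (sqrt (a p))\<^sup>2) * card P"
    by (rule sum_squared_le_sum_of_squares)
  also have "(\<Sum>p\<in>P. (sqrt (a p))\<^sup>2) = (\<Sum>p\<in>P. a p)"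
    using assms by (intro sum.cong) auto
  finally show ?thesis
    by (metis mult.commute real_le_rsqrt sum_nonneg real_sqrt_ge_zero)
qed

definition abs_block_sums :: "nat \<Rightarrow> (nat \<Rightarrow> 'b) \<Rightarrow> (nat \<Rightarrow> real) \<Rightarrow> real" where
  "abs_block_sums n c x = (\<Sum>p\<in>c ` {..<n}. \<bar>\<Sum>i | i < n \<and> c i = p. x i\<bar>)"

lemma abs_block_sums_nonneg: "abs_block_sums n c x \<ge> 0"
  by (simp add: abs_block_sums_def sum_nonneg)

lemma abs_sum_le_abs_block_sums:
  fixes x :: "nat \<Rightarrow> real" and h :: "'b \<Rightarrow> real"
  assumes "\<And>i. i < n \<Longrightarrow> \<bar>h (c i)\<bar> \<le> e"
  shows "\<bar>\<Sum>i<n. x i * h (c i)\<bar> \<le> e * abs_block_sums n c x"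
proof -
  have "(\<Sum>i<n. x i * h (c i)) = (\<Sum>p\<in>c ` {..<n}. \<Sum>i | i \<in> {..<n} \<and> c i = p. x i * h (c i))"
    by (rule sum.group[symmetric]) auto
  also have "\<dots> = (\<Sum>p\<in>c ` {..<n}. h p * (\<Sum>i | i < n \<and> c i = p. x i))"
    by (auto simp: sum_distrib_left mult.commute intro!: sum.cong)
  finally have "\<bar>\<Sum>i<n. x i * h (c i)\<bar> \<le> (\<Sum>p\<in>c ` {..<n}. \<bar>h p\<bar> * \<bar>\<Sum>i | i < n \<and> c i = p. x i\<bar>)"
    by (metis (no_types, lifting) abs_mult sum.cong sum_abs)
  also have "\<dots> \<le> (\<Sum>p\<in>c ` {..<n}. e * \<bar>\<Sum>i | i < n \<and> c i = p. x i\<bar>)"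
    using assms by (intro sum_mono mult_right_mono) auto
  finally show ?thesis by (simp add: abs_block_sums_def sum_distrib_left)
qed

lemma borel_measurable_abs_block_sums [measurable]:
  "abs_block_sums n c \<in> borel_measurable (gauss_vec n)"
  unfolding abs_block_sums_def
  by (intro borel_measurable_sum borel_measurable_abs borel_measurable_gauss_vec_sum) auto

lemma nn_integral_abs_block_sums_le:
  "(\<integral>\<^sup>+x. ennreal (abs_block_sums n c x) \<partial>gauss_vec n) \<le> ennreal (sqrt (card (c ` {..<n}) * n))"
proof -
  let ?T = "c ` {..<n}" and ?J = "\<lambda>p. {i. i < n \<and> c i = p}"
  have "(\<integral>\<^sup>+x. ennreal (abs_block_sums n c x) \<partial>gauss_vec n)
      = (\<integral>\<^sup>+x. (\<Sum>p\<in>?T. ennreal \<bar>\<Sum>i\<in>?J p. x i\<bar>) \<partial>gauss_vec n)"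
    by (intro nn_integral_cong) (simp add: abs_block_sums_def sum_ennreal)
  also have "\<dots> = (\<Sum>p\<in>?T. \<integral>\<^sup>+x. ennreal \<bar>\<Sum>i\<in>?J p. x i\<bar> \<partial>gauss_vec n)"
    by (rule nn_integral_sum) (auto intro!: borel_measurable_abs borel_measurable_gauss_vec_sum)
  also have "\<dots> \<le> (\<Sum>p\<in>?T. ennreal (sqrt (card (?J p))))"
    by (intro sum_mono nn_integral_gauss_vec_abs_sum_le) auto
  also have "\<dots> = ennreal (\<Sum>p\<in>?T. sqrt (card (?J p)))"
    by (simp add: sum_ennreal)
  also have "(\<Sum>p\<in>?T. sqrt (card (?J p))) \<le> sqrt (card ?T * (\<Sum>p\<in>?T. real (card (?J p))))"
    by (intro sum_sqrt_le_sqrt_card_mult_sum) auto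
  also have "(\<Sum>p\<in>?T. real (card (?J p))) = n"
    using sum.group[of "{..<n}" ?T c "\<lambda>_. 1::real"] by simp
  finally show ?thesis by (simp add: ennreal_leI)
qed

definition eps_separated :: "real \<Rightarrow> 'a::metric_space set \<Rightarrow> bool" where
  "eps_separated \<epsilon> N \<longleftrightarrow> (\<forall>p\<in>N. \<forall>q\<in>N. p \<noteq> q \<longrightarrow> \<epsilon> < dist p q)"

lemma disjoint_family_on_cball_eps_separated:
  assumes "eps_separated \<epsilon> N"
  shows "disjoint_family_on (\<lambda>p. cball p (\<epsilon> / 2)) N"
  unfolding disjoint_family_on_def
proof (intro ballI impI equals0I)
  fix p q y assume "p \<in> N" "q \<in> N" "p \<noteq> q" "y \<in> cball p (\<epsilon> / 2) \<inter> cball q (\<epsilon> / 2)"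
  then have "dist p q \<le> \<epsilon>" using dist_triangle3[of p q y] by (simp add: dist_commute)
  with \<open>p \<in> N\<close> \<open>q \<in> N\<close> \<open>p \<noteq> q\<close> assms show False
    unfolding eps_separated_def by fastforce
qed

lemma card_eps_separated_le:
  fixes \<Omega> :: "'a::euclidean_space set"
  assumes "bounded \<Omega>" "diameter \<Omega> \<le> D" "\<epsilon> > 0"
    and "finite N" "N \<subseteq> \<Omega>" "eps_separated \<epsilon> N"
  shows "card N \<le> (1 + 2 * D / \<epsilon>) ^ DIM('a)"
proof (cases "N = {}")
  case True
  then show ?thesis using assms(1-3) diameter_ge_0[of \<Omega>] by simp
next
  case False
  then obtain z0 where z0: "z0 \<in> N" by auto
  let ?d = "DIM('a)" and ?V = "unit_ball_vol (real DIM('a))"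
  have D: "D \<ge> 0" using diameter_ge_0[OF assms(1)] assms(2) by linarith
  \<comment> \<open>Volume argument: the disjoint balls of radius \<open>\<epsilon>/2\<close> around \<open>N\<close> lie in a ball of radius \<open>D + \<epsilon>/2\<close>.\<close>
  note disj = disjoint_family_on_cball_eps_separated[OF assms(6)]
  have sub: "(\<Union>p\<in>N. cball p (\<epsilon> / 2)) \<subseteq> cball z0 (D + \<epsilon> / 2)"
  proof
    fix y assume "y \<in> (\<Union>p\<in>N. cball p (\<epsilon> / 2))"
    then obtain p where "p \<in> N" "dist p y \<le> \<epsilon> / 2" by auto
    moreover have "dist z0 p \<le> D"
      using diameter_bounded_bound[OF assms(1)] z0 \<open>p \<in> N\<close> assms(2,5) by force
    ultimately show "y \<in> cball z0 (D + \<epsilon> / 2)" using dist_triangle[of z0 y p] by simp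
  qed
  have "(\<Sum>p\<in>N. emeasure lborel (cball p (\<epsilon> / 2))) = emeasure lborel (\<Union>p\<in>N. cball p (\<epsilon> / 2))"
    using disj assms(4) by (intro sum_emeasure) auto
  also have "\<dots> \<le> emeasure lborel (cball z0 (D + \<epsilon> / 2))"
    using sub by (intro emeasure_mono) auto
  finally have "ennreal (card N * (?V * (\<epsilon> / 2) ^ ?d)) \<le> ennreal (?V * (D + \<epsilon> / 2) ^ ?d)"
    using assms(3) D by (simp add: emeasure_cball ennreal_mult' ennreal_of_nat_eq_real_of_nat)
  then have "card N * (?V * (\<epsilon> / 2) ^ ?d) \<le> ?V * (D + \<epsilon> / 2) ^ ?d"
    using D assms(3) by (subst (asm) ennreal_le_iff) auto
  then have "card N \<le> (D + \<epsilon> / 2) ^ ?d / (\<epsilon> / 2) ^ ?d"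
    using assms(3) by (simp add: field_simps)
  also have "\<dots> = ((D + \<epsilon> / 2) / (\<epsilon> / 2)) ^ ?d"
    by (rule power_divide[symmetric])
  also have "(D + \<epsilon> / 2) / (\<epsilon> / 2) = 1 + 2 * D / \<epsilon>"
    using assms(3) by (simp add: field_simps)
  finally show ?thesis .
qed

lemma exists_eps_net:
  fixes \<Omega> :: "'a::euclidean_space set"
  assumes "bounded \<Omega>" "diameter \<Omega> \<le> D" "\<epsilon> > 0"
  obtains N where "finite N" "N \<subseteq> \<Omega>" "card N \<le> (1 + 2 * D / \<epsilon>) ^ DIM('a)"
    "\<And>z. z \<in> \<Omega> \<Longrightarrow> \<exists>p\<in>N. dist z p \<le> \<epsilon>"
proof -
  let ?P = "\<lambda>c. \<exists>N. finite N \<and> N \<subseteq> \<Omega> \<and> eps_separated \<epsilon> N \<and> card N = c"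
  have bounded_card: "\<forall>c. ?P c \<longrightarrow> c \<le> nat \<lfloor>(1 + 2 * D / \<epsilon>) ^ DIM('a)\<rfloor>"
  proof (intro allI impI)
    fix c assume "?P c"
    then obtain N where N: "finite N" "N \<subseteq> \<Omega>" "eps_separated \<epsilon> N" "card N = c" by blast
    then have "real c \<le> (1 + 2 * D / \<epsilon>) ^ DIM('a)" using card_eps_separated_le[OF assms N(1-3)] by simp
    then show "c \<le> nat \<lfloor>(1 + 2 * D / \<epsilon>) ^ DIM('a)\<rfloor>" by (rule le_nat_floor)
  qed
  have "?P 0" by (intro exI[of _ "{}"]) (simp add: eps_separated_def)
  \<comment> \<open>A separated set of maximal cardinality is an \<open>\<epsilon>\<close>-net.\<close>
  from Nat.ex_has_greatest_nat[OF this bounded_card]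
  obtain c where c: "?P c" "\<forall>c'. ?P c' \<longrightarrow> c' \<le> c" by blast
  then obtain N where N: "finite N" "N \<subseteq> \<Omega>" "eps_separated \<epsilon> N" "card N = c" by blast
  have "\<exists>p\<in>N. dist z p \<le> \<epsilon>" if z: "z \<in> \<Omega>" for z
  proof (rule ccontr)
    assume far: "\<not> (\<exists>p\<in>N. dist z p \<le> \<epsilon>)"
    then have "z \<notin> N" using assms(3) by (metis dist_self less_le)
    moreover have "eps_separated \<epsilon> (insert z N)"
      using N(3) far by (auto simp: eps_separated_def not_le dist_commute)
    ultimately have "?P (Suc c)" using N z by (intro exI[of _ "insert z N"]) simp
    then show False using c(2) by (metis Suc_n_not_le_n)
  qed
  with N show ?thesis using that card_eps_separated_le[OF assms N(1-3)] by simp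
qed

lemma foldr_mem_closed:
  assumes "\<And>k y. y \<in> \<Omega> \<Longrightarrow> \<pi> k y \<in> \<Omega>" "y \<in> \<Omega>"
  shows "foldr \<pi> ks y \<in> \<Omega>"
  using assms by (induction ks) auto

lemma foldr_upt_mem:
  assumes "\<And>k y. y \<in> \<Omega> \<Longrightarrow> \<pi> k y \<in> N k" "\<And>k. N k \<subseteq> \<Omega>" "y \<in> \<Omega>" "k < t"
  shows "foldr \<pi> [k..<t] y \<in> N k"
proof -
  have "foldr \<pi> [Suc k..<t] y \<in> \<Omega>"
    using assms by (intro foldr_mem_closed) auto
  then show ?thesis using assms(1,4) by (simp add: upt_conv_Cons)
qed

lemma foldr_upt_step: "k < t \<Longrightarrow> foldr \<pi> [k..<t] y = \<pi> k (foldr \<pi> [Suc k..<t] y)"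
  by (simp add: upt_conv_Cons)

text \<open>Chaining: \<open>foldr \<pi> [k..<t] y = \<pi> k (\<pi> (k+1) (\<dots> (\<pi> (t-1) y)))\<close> is the approximation of
  \<open>y\<close> at level \<open>k\<close>, obtained by projecting successively to the coarser levels below \<open>t\<close>.
  Telescoping \<open>f y\<close> along this chain and grouping equal links bounds the sum by block sums.\<close>
lemma chaining_decomposition:
  fixes \<pi> :: "nat \<Rightarrow> 'a::metric_space \<Rightarrow> 'a" and f :: "'a \<Rightarrow> real" and x :: "nat \<Rightarrow> real"
  assumes \<pi>: "\<And>k y. y \<in> \<Omega> \<Longrightarrow> \<pi> k y \<in> \<Omega>" "\<And>k y. y \<in> \<Omega> \<Longrightarrow> dist y (\<pi> k y) \<le> D / 2 ^ k"
    and f: "\<And>y. y \<in> \<Omega> \<Longrightarrow> \<bar>f y\<bar> \<le> D"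
      "\<And>y1 y2. y1 \<in> \<Omega> \<Longrightarrow> y2 \<in> \<Omega> \<Longrightarrow> \<bar>f y1 - f y2\<bar> \<le> dist y1 y2"
    and z: "\<And>i. i < n \<Longrightarrow> z i \<in> \<Omega>"
  shows "\<bar>\<Sum>i<n. x i * f (z i)\<bar> \<le> D * abs_block_sums n (\<lambda>i. foldr \<pi> [0..<t] (z i)) x
           + (\<Sum>k<t. D / 2 ^ k * abs_block_sums n (\<lambda>i. foldr \<pi> [Suc k..<t] (z i)) x)"
proof -
  define L where "L k = (\<lambda>i. foldr \<pi> [k..<t] (z i))" for k
  define h where "h k p = f p - f (\<pi> k p)" for k p
  have L_mem: "L k i \<in> \<Omega>" if "i < n" for k i
    unfolding L_def using foldr_mem_closed[OF \<pi>(1) z[OF that]] .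
  have "f (z i) = f (L 0 i) + (\<Sum>k<t. h k (L (Suc k) i))" for i
    using sum_lessThan_telescope[of "\<lambda>k. f (L k i)" t]
    by (simp add: L_def h_def foldr_upt_step)
  then have "(\<Sum>i<n. x i * f (z i)) = (\<Sum>i<n. x i * f (L 0 i)) + (\<Sum>k<t. \<Sum>i<n. x i * h k (L (Suc k) i))"
    by (simp add: distrib_left sum_distrib_left sum.distrib sum.swap[of _ "{..<t}"])
  also have "\<bar>\<dots>\<bar> \<le> \<bar>\<Sum>i<n. x i * f (L 0 i)\<bar> + (\<Sum>k<t. \<bar>\<Sum>i<n. x i * h k (L (Suc k) i)\<bar>)"
    by (intro order.trans[OF abs_triangle_ineq] add_left_mono sum_abs)
  also have "\<dots> \<le> D * abs_block_sums n (L 0) x + (\<Sum>k<t. D / 2 ^ k * abs_block_sums n (L (Suc k)) x)"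
  proof (intro add_mono sum_mono abs_sum_le_abs_block_sums)
    show "\<bar>f (L 0 i)\<bar> \<le> D" if "i < n" for i using f(1) L_mem that .
    show "\<bar>h k (L (Suc k) i)\<bar> \<le> D / 2 ^ k" if "i < n" for k i
      unfolding h_def using f(2) \<pi> L_mem[OF that] by (meson order.trans)
  qed
  finally show ?thesis unfolding L_def .
qed

lemma sum_ennreal_mult:
  assumes "\<And>j. j \<in> J \<Longrightarrow> a j \<ge> 0" "\<And>j. j \<in> J \<Longrightarrow> b j \<ge> 0"
  shows "(\<Sum>j\<in>J. ennreal (a j) * ennreal (b j)) = ennreal (\<Sum>j\<in>J. a j * b j)"
proof -
  have "(\<Sum>j\<in>J. ennreal (a j) * ennreal (b j)) = (\<Sum>j\<in>J. ennreal (a j * b j))"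
    using assms by (intro sum.cong) (simp_all add: ennreal_mult)
  also have "\<dots> = ennreal (\<Sum>j\<in>J. a j * b j)"
    using assms by (intro sum_ennreal) simp
  finally show ?thesis .
qed

lemma nn_integral_sum_abs_block_sums_le:
  assumes "finite J" "\<And>j. j \<in> J \<Longrightarrow> w j \<ge> 0"
  shows "(\<integral>\<^sup>+x. ennreal (\<Sum>j\<in>J. w j * abs_block_sums n (c j) x) \<partial>gauss_vec n)
           \<le> ennreal (\<Sum>j\<in>J. w j * sqrt (card (c j ` {..<n}) * n))"
proof -
  have "(\<integral>\<^sup>+x. ennreal (\<Sum>j\<in>J. w j * abs_block_sums n (c j) x) \<partial>gauss_vec n)
      = (\<integral>\<^sup>+x. (\<Sum>j\<in>J. ennreal (w j) * ennreal (abs_block_sums n (c j) x)) \<partial>gauss_vec n)"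
    using assms(2) by (intro nn_integral_cong) (simp add: sum_ennreal_mult abs_block_sums_nonneg)
  also have "\<dots> = (\<Sum>j\<in>J. \<integral>\<^sup>+x. ennreal (w j) * ennreal (abs_block_sums n (c j) x) \<partial>gauss_vec n)"
    by (intro nn_integral_sum) measurable
  also have "\<dots> = (\<Sum>j\<in>J. ennreal (w j) * \<integral>\<^sup>+x. ennreal (abs_block_sums n (c j) x) \<partial>gauss_vec n)"
    using borel_measurable_abs_block_sums by (intro sum.cong refl nn_integral_cmult) auto
  also have "\<dots> \<le> (\<Sum>j\<in>J. ennreal (w j) * ennreal (sqrt (card (c j ` {..<n}) * n)))"
    by (intro sum_mono mult_left_mono nn_integral_abs_block_sums_le) auto
  also have "\<dots> = ennreal (\<Sum>j\<in>J. w j * sqrt (card (c j ` {..<n}) * n))"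
    using assms(2) by (simp add: sum_ennreal_mult)
  finally show ?thesis .
qed

lemma nn_integral_sup_F_BL_le_chaining:
  fixes \<Omega> :: "'a::euclidean_space set" and \<pi> :: "nat \<Rightarrow> 'a \<Rightarrow> 'a" and t :: nat and D :: real
  assumes \<Omega>: "bounded \<Omega>" "diameter \<Omega> \<le> D"
    and \<pi>: "\<And>k y. y \<in> \<Omega> \<Longrightarrow> \<pi> k y \<in> \<Omega>" "\<And>k y. y \<in> \<Omega> \<Longrightarrow> dist y (\<pi> k y) \<le> D / 2 ^ k"
    and z: "\<And>i. i < n \<Longrightarrow> z i \<in> \<Omega>"
  defines "N k \<equiv> card ((\<lambda>i. foldr \<pi> [k..<t] (z i)) ` {..<n})"
  shows "(\<integral>\<^sup>+x. (SUP f\<in>F_BL \<Omega>. ennreal (\<bar>\<Sum>i<n. x i * f (z i)\<bar> / n)) \<partial>gauss_vec n)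
           \<le> ennreal ((D * sqrt (N 0 * n) + (\<Sum>k<t. D / 2 ^ k * sqrt (N (Suc k) * n))) / n)"
proof -
  define w where "w j = (case j of 0 \<Rightarrow> D | Suc k \<Rightarrow> D / 2 ^ k)" for j
  define c where "c j = (\<lambda>i. foldr \<pi> [j..<t] (z i))" for j
  have D: "D \<ge> 0" using diameter_ge_0[OF \<Omega>(1)] \<Omega>(2) by linarith
  then have w: "w j \<ge> 0" for j by (simp add: w_def split: nat.split)
  have "\<bar>\<Sum>i<n. x i * f (z i)\<bar> / n \<le> (\<Sum>j<Suc t. w j * abs_block_sums n (c j) x) / n"
    if "f \<in> F_BL \<Omega>" for f x
  proof -
    have bounded: "\<bar>f y\<bar> \<le> D" if "y \<in> \<Omega>" for y
      using \<open>f \<in> F_BL \<Omega>\<close> that \<Omega>(2) by (force simp: F_BL_def)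
    have lipschitz: "\<bar>f y1 - f y2\<bar> \<le> dist y1 y2" if "y1 \<in> \<Omega>" "y2 \<in> \<Omega>" for y1 y2
      using \<open>f \<in> F_BL \<Omega>\<close> that by (simp add: F_BL_def)
    have "\<bar>\<Sum>i<n. x i * f (z i)\<bar> \<le> (\<Sum>j<Suc t. w j * abs_block_sums n (c j) x)"
      using chaining_decomposition[where z = z and n = n and x = x and t = t, OF \<pi> bounded lipschitz z]
      unfolding sum.lessThan_Suc_shift by (simp add: w_def c_def)
    then show ?thesis by (simp add: divide_right_mono)
  qed
  then have "(\<integral>\<^sup>+x. (SUP f\<in>F_BL \<Omega>. ennreal (\<bar>\<Sum>i<n. x i * f (z i)\<bar> / n)) \<partial>gauss_vec n)
      \<le> (\<integral>\<^sup>+x. ennreal (\<Sum>j<Suc t. (w j / n) * abs_block_sums n (c j) x) \<partial>gauss_vec n)"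
    by (intro nn_integral_mono SUP_least ennreal_leI) (simp add: sum_divide_distrib add_divide_distrib)
  also have "\<dots> \<le> ennreal (\<Sum>j<Suc t. (w j / n) * sqrt (card (c j ` {..<n}) * n))"
    using w by (intro nn_integral_sum_abs_block_sums_le) auto
  also have "(\<Sum>j<Suc t. (w j / n) * sqrt (card (c j ` {..<n}) * n))
      = (D * sqrt (N 0 * n) + (\<Sum>k<t. D / 2 ^ k * sqrt (N (Suc k) * n))) / n"
    unfolding sum.lessThan_Suc_shift by (simp add: w_def c_def N_def add_divide_distrib sum_divide_distrib)
  finally show ?thesis by simp
qed

lemma nn_integral_sup_F_BL_le_diameter:
  fixes \<Omega> :: "'a::euclidean_space set"
  assumes "bounded \<Omega>" "diameter \<Omega> \<le> D" "\<And>i. i < n \<Longrightarrow> z i \<in> \<Omega>"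
  shows "(\<integral>\<^sup>+x. (SUP f\<in>F_BL \<Omega>. ennreal (\<bar>\<Sum>i<n. x i * f (z i)\<bar> / n)) \<partial>gauss_vec n) \<le> ennreal D"
proof -
  have D: "D \<ge> 0" using diameter_ge_0[OF assms(1)] assms(2) by linarith
  have "real (card (z ` {..<n})) \<le> n" using card_image_le[of "{..<n}" z] by simp
  then have "D * sqrt (card (z ` {..<n}) * n) \<le> D * sqrt (n * n)"
    using D by (intro mult_left_mono real_sqrt_le_mono) (simp_all add: mult_right_mono)
  then have "(D * sqrt (card (z ` {..<n}) * n)) / n \<le> D"
    using D by (cases "n = 0") (auto simp: divide_le_eq)
  \<comment> \<open>Chaining with no levels: the only blocks are the classes of equal sample points.\<close>
  moreover have "(\<integral>\<^sup>+x. (SUP f\<in>F_BL \<Omega>. ennreal (\<bar>\<Sum>i<n. x i * f (z i)\<bar> / n)) \<partial>gauss_vec n)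
      \<le> ennreal ((D * sqrt (card (z ` {..<n}) * n)) / n)"
    using nn_integral_sup_F_BL_le_chaining[where \<pi> = "\<lambda>k y. y" and t = 0, OF assms(1,2) _ _ assms(3)] D
    by simp
  ultimately show ?thesis by (meson order.trans ennreal_leI)
qed

lemma exists_dyadic_nets:
  fixes \<Omega> :: "'a::euclidean_space set"
  assumes "bounded \<Omega>" "diameter \<Omega> \<le> D" "D > 0" "z0 \<in> \<Omega>"
  obtains N :: "nat \<Rightarrow> 'a set" and \<pi> :: "nat \<Rightarrow> 'a \<Rightarrow> 'a" where
    "\<And>k. finite (N k)" "\<And>k. N k \<subseteq> \<Omega>" "N 0 = {z0}"
    "\<And>k. k \<ge> 1 \<Longrightarrow> real (card (N k)) \<le> (1 + 2 ^ (k + 1)) ^ DIM('a)"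
    "\<And>k y. y \<in> \<Omega> \<Longrightarrow> \<pi> k y \<in> N k \<and> dist y (\<pi> k y) \<le> D / 2 ^ k"
proof -
  have "\<forall>k. \<exists>N. finite N \<and> N \<subseteq> \<Omega> \<and> real (card N) \<le> (1 + 2 ^ (k + 1)) ^ DIM('a)
          \<and> (\<forall>y\<in>\<Omega>. \<exists>p\<in>N. dist y p \<le> D / 2 ^ k)"
  proof
    fix k :: nat
    have "2 * D / (D / 2 ^ k) = 2 ^ (k + 1)" using assms(3) by simp
    moreover obtain N where "finite N" "N \<subseteq> \<Omega>" "card N \<le> (1 + 2 * D / (D / 2 ^ k)) ^ DIM('a)"
      "\<And>y. y \<in> \<Omega> \<Longrightarrow> \<exists>p\<in>N. dist y p \<le> D / 2 ^ k"
      using exists_eps_net[OF assms(1,2), of "D / 2 ^ k"] assms(3) by auto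
    ultimately show "\<exists>N. finite N \<and> N \<subseteq> \<Omega> \<and> real (card N) \<le> (1 + 2 ^ (k + 1)) ^ DIM('a)
          \<and> (\<forall>y\<in>\<Omega>. \<exists>p\<in>N. dist y p \<le> D / 2 ^ k)" by auto
  qed
  then obtain M where M: "\<And>k. finite (M k)" "\<And>k. M k \<subseteq> \<Omega>"
    "\<And>k. real (card (M k)) \<le> (1 + 2 ^ (k + 1)) ^ DIM('a)" "\<And>k y. y \<in> \<Omega> \<Longrightarrow> \<exists>p\<in>M k. dist y p \<le> D / 2 ^ k"
    by (auto dest!: choice)
  define N where "N k = (if k = 0 then {z0} else M k)" for k
  have near: "\<exists>p. p \<in> N k \<and> dist y p \<le> D / 2 ^ k" if "y \<in> \<Omega>" for k y
  proof (cases "k = 0")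
    case True
    then show ?thesis using diameter_bounded_bound[OF assms(1) that assms(4)] assms(2) by (simp add: N_def)
  qed (use M(4) that in \<open>auto simp: N_def\<close>)
  show ?thesis
  proof (rule that[of N "\<lambda>k y. SOME p. p \<in> N k \<and> dist y p \<le> D / 2 ^ k"])
    show "\<And>k. finite (N k)" "\<And>k. N k \<subseteq> \<Omega>" "N 0 = {z0}" using M(1,2) assms(4) by (simp_all add: N_def)
    show "real (card (N k)) \<le> (1 + 2 ^ (k + 1)) ^ DIM('a)" if "k \<ge> 1" for k using M(3) that by (simp add: N_def)
    show "(SOME p. p \<in> N k \<and> dist y p \<le> D / 2 ^ k) \<in> N k \<and> dist y (SOME p. p \<in> N k \<and> dist y p \<le> D / 2 ^ k) \<le> D / 2 ^ k"
      if "y \<in> \<Omega>" for k y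
      using someI_ex[OF near[OF that]] .
  qed
qed

text \<open>The chaining estimate with \<open>K\<close> dyadic levels, normalised by the diameter; the \<open>k\<close>-th term
  comes from a net at scale \<open>2\<^sup>-\<^sup>k\<close> with at most \<open>(1 + 2\<^sup>k\<^sup>+\<^sup>1)\<^sup>d\<close> points.\<close>
definition chaining_bound :: "nat \<Rightarrow> nat \<Rightarrow> nat \<Rightarrow> real" where
  "chaining_bound d n K =
     1 / sqrt n + (\<Sum>k\<in>{1..K}. 2 / 2 ^ k * sqrt ((1 + 2 ^ (k + 1)) ^ d)) / sqrt n + 1 / 2 ^ K"

lemma chaining_sum_le_chaining_bound:
  fixes N :: "nat \<Rightarrow> real"
  assumes "n \<ge> 1" "D \<ge> 0" "N 0 \<le> 1" "\<And>k. k < K \<Longrightarrow> N (Suc k) \<le> (1 + 2 ^ (k + 2)) ^ d"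
    "N (Suc K) \<le> n"
  shows "(D * sqrt (N 0 * n) + (\<Sum>k<Suc K. D / 2 ^ k * sqrt (N (Suc k) * n))) / n
           \<le> D * chaining_bound d n K"
proof -
  define s where "s = sqrt n"
  define S where "S = (\<Sum>k<K. sqrt ((1 + 2 ^ (k + 2)) ^ d) / 2 ^ k)"
  have s: "real n = s * s" "s > 0" using assms(1) by (simp_all add: s_def)
  have sqrt_mult: "sqrt (x * n) = sqrt x * s" for x :: real by (simp add: real_sqrt_mult s_def)
  have "sqrt (N 0) * s \<le> 1 * s" using assms(3) s(2) by (intro mult_right_mono) auto
  then have "D * sqrt (N 0 * n) \<le> D * s"
    unfolding sqrt_mult using assms(2) by (intro mult_left_mono) auto
  moreover have "(\<Sum>k<K. D / 2 ^ k * sqrt (N (Suc k) * n)) \<le> D * s * S"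
    unfolding S_def sum_distrib_left sqrt_mult using assms(2,4) s
    by (intro sum_mono) (auto simp: field_simps intro!: mult_left_mono)
  moreover have "D / 2 ^ K * sqrt (N (Suc K) * n) \<le> D / 2 ^ K * (s * s)"
  proof -
    have "sqrt (N (Suc K)) \<le> s" using assms(5) by (simp add: s_def)
    then have "sqrt (N (Suc K) * n) \<le> s * s" unfolding sqrt_mult using s(2) by (simp add: mult_right_mono)
    then show ?thesis using assms(2) by (intro mult_left_mono) auto
  qed
  ultimately have "(D * sqrt (N 0 * n) + (\<Sum>k<Suc K. D / 2 ^ k * sqrt (N (Suc k) * n))) / n
      \<le> (D * s + D * s * S + D / 2 ^ K * (s * s)) / (s * s)"
    unfolding sum.lessThan_Suc s(1) by (intro divide_right_mono) auto
  also have "(\<Sum>k\<in>{1..K}. 2 / 2 ^ k * sqrt ((1 + 2 ^ (k + 1)) ^ d)) = S"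
    by (simp add: S_def sum.atLeast1_atMost_eq)
  then have "(D * s + D * s * S + D / 2 ^ K * (s * s)) / (s * s) = D * chaining_bound d n K"
    using s by (simp add: chaining_bound_def s_def[symmetric] field_simps)
  finally show ?thesis .
qed

lemma nn_integral_sup_F_BL_le_chaining_bound:
  fixes \<Omega> :: "'a::euclidean_space set"
  assumes \<Omega>: "bounded \<Omega>" "diameter \<Omega> \<le> D" and "D > 0" "n \<ge> 1" and z: "\<And>i. i < n \<Longrightarrow> z i \<in> \<Omega>"
  shows "(\<integral>\<^sup>+x. (SUP f\<in>F_BL \<Omega>. ennreal (\<bar>\<Sum>i<n. x i * f (z i)\<bar> / n)) \<partial>gauss_vec n)
           \<le> ennreal (D * chaining_bound DIM('a) n K)"
proof -
  obtain N \<pi> where N: "\<And>k. finite (N k)" "\<And>k. N k \<subseteq> \<Omega>" "N 0 = {z 0}"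
    "\<And>k. k \<ge> 1 \<Longrightarrow> real (card (N k)) \<le> (1 + 2 ^ (k + 1)) ^ DIM('a)"
    and \<pi>: "\<And>k y. y \<in> \<Omega> \<Longrightarrow> \<pi> k y \<in> N k \<and> dist y (\<pi> k y) \<le> D / 2 ^ k"
    using exists_dyadic_nets[OF \<Omega> \<open>D > 0\<close> z[of 0]] \<open>n \<ge> 1\<close> by auto
  have \<pi>_net: "\<pi> k y \<in> N k" if "y \<in> \<Omega>" for k y using \<pi>[OF that] by blast
  have \<pi>_mem: "\<pi> k y \<in> \<Omega>" if "y \<in> \<Omega>" for k y using \<pi>_net[OF that] N(2) by blast
  define c where "c k = (\<lambda>i. foldr \<pi> [k..<Suc K] (z i))" for k
  have card_le: "real (card (c k ` {..<n})) \<le> real (card (N k))" if "k \<le> K" for k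
  proof -
    have "c k ` {..<n} \<subseteq> N k"
    proof (rule image_subsetI)
      fix i assume "i \<in> {..<n}"
      then show "c k i \<in> N k"
        unfolding c_def using that z by (intro foldr_upt_mem[where \<Omega> = \<Omega>, OF \<pi>_net N(2)]) auto
    qed
    then show ?thesis using card_mono[OF N(1)] by simp
  qed
  have "(D * sqrt (real (card (c 0 ` {..<n})) * n)
        + (\<Sum>k<Suc K. D / 2 ^ k * sqrt (real (card (c (Suc k) ` {..<n})) * n))) / n
      \<le> D * chaining_bound DIM('a) n K"
  proof (rule chaining_sum_le_chaining_bound)
    show "real (card (c 0 ` {..<n})) \<le> 1" using card_le[of 0] N(3) by simp
    show "real (card (c (Suc k) ` {..<n})) \<le> (1 + 2 ^ (k + 2)) ^ DIM('a)" if "k < K" for k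
      using card_le[of "Suc k"] N(4)[of "Suc k"] that by simp
    show "real (card (c (Suc K) ` {..<n})) \<le> n" using card_image_le[of "{..<n}" "c (Suc K)"] by simp
  qed (use \<open>D > 0\<close> \<open>n \<ge> 1\<close> in auto)
  then show ?thesis
    using nn_integral_sup_F_BL_le_chaining[where \<pi> = \<pi> and t = "Suc K", OF \<Omega> \<pi>_mem _ z] \<pi>
    unfolding c_def by (fastforce intro: order.trans ennreal_leI)
qed

definition complexity_rate :: "nat \<Rightarrow> nat \<Rightarrow> real" where
  "complexity_rate d n = (if d = 1 then 9 * sqrt (ln (2 * sqrt n)) / sqrt n
     else if d = 2 then 10 * ln (2 * sqrt n) powr (3/2) / sqrt n
     else 10 * sqrt (ln (2 * real n powr (1 / real d) * (real d / 2 - 1) powr (2 / real d)))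
          / (real n powr (1 / real d) * (real d / 2 - 1) powr (2 / real d)))"

lemma sum_power_atLeast1_le_lt1:
  fixes r :: real assumes "0 \<le> r" "r < 1"
  shows "(\<Sum>k\<in>{1..K}. r ^ k) \<le> r / (1 - r)"
proof -
  have "(\<Sum>k\<in>{1..K}. r ^ k) = r * (\<Sum>k<K. r ^ k)"
    by (simp add: sum.atLeast1_atMost_eq sum_distrib_left)
  also have "\<dots> = r * (1 - r ^ K) / (1 - r)"
    using assms sum_gp_strict[of r K] by simp
  also have "\<dots> \<le> r / (1 - r)"
    using assms by (intro divide_right_mono) (auto simp: mult_left_le)
  finally show ?thesis .
qed

lemma sum_power_atLeast1_le_gt1:
  fixes r :: real assumes "r > 1"
  shows "(\<Sum>k\<in>{1..K}. r ^ k) \<le> r ^ (K + 1) / (r - 1)"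
proof -
  have "(\<Sum>k\<in>{1..K}. r ^ k) = r * (\<Sum>k<K. r ^ k)"
    by (simp add: sum.atLeast1_atMost_eq sum_distrib_left)
  also have "\<dots> = r * (r ^ K - 1) / (r - 1)"
    using assms geometric_sum[of r K] by simp
  also have "\<dots> \<le> r ^ (K + 1) / (r - 1)"
    using assms by (intro divide_right_mono) (auto simp: algebra_simps)
  finally show ?thesis .
qed

lemma chaining_sum_dim1_le: "(\<Sum>k\<in>{1..K}. 2 / 2 ^ k * sqrt ((1 + 2 ^ (k + 1)) ^ 1)) \<le> (7643 / 1000 :: real)"
proof -
  define t where "t = sqrt (2::real)"
  have t: "t > 0" "t * t = 2" "t \<ge> 1414/1000"
    unfolding t_def by (simp, simp, rule real_le_rsqrt, simp add: power2_eq_square)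
  have term_le: "2 / 2 ^ k * sqrt ((1 + 2 ^ (k + 1)) ^ 1) \<le> (2 * (791/500)) * (1 / t) ^ k"
    if "k \<ge> 1" for k :: nat
  proof -
    have "1 + 2 ^ (k + 1) \<le> (5/2) * (2::real) ^ k"
      using that by (simp add: one_le_power[of 2] order.trans[OF _ power_increasing[of 1 k]])
    then have "sqrt ((1 + 2 ^ (k + 1)) ^ 1) \<le> sqrt (5/2) * t ^ k"
      by (simp add: t_def real_sqrt_mult[symmetric] real_sqrt_power[symmetric])
    also have "\<dots> \<le> (791/500) * t ^ k"
    proof (rule mult_right_mono)
      show "sqrt (5/2) \<le> (791/500 :: real)" by (rule real_sqrt_le_iff'[THEN iffD2]) (simp_all add: power2_eq_square)
    qed (use t in simp)
    finally have "2 / 2 ^ k * sqrt ((1 + 2 ^ (k + 1)) ^ 1) \<le> 2 / 2 ^ k * ((791/500) * t ^ k)"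
      by (intro mult_left_mono) auto
    also have "\<dots> = (2 * (791/500)) * (1 / t) ^ k"
    proof -
      have "(2::real) ^ k = t ^ k * t ^ k" using t by (simp add: power_mult_distrib[symmetric])
      then show ?thesis using t by (simp add: power_one_over field_simps)
    qed
    finally show ?thesis .
  qed
  have "(\<Sum>k\<in>{1..K}. 2 / 2 ^ k * sqrt ((1 + 2 ^ (k + 1)) ^ 1)) \<le> (2 * (791/500)) * (\<Sum>k\<in>{1..K}. (1 / t) ^ k)"
    unfolding sum_distrib_left by (intro sum_mono term_le) simp
  also have "\<dots> \<le> (2 * (791/500)) * ((1 / t) / (1 - 1 / t))"
    using t by (intro mult_left_mono sum_power_atLeast1_le_lt1) auto
  also have "(1 / t) / (1 - 1 / t) = 1 / (t - 1)" using t by (simp add: field_simps)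
  also have "(2 * (791/500)) * (1 / (t - 1)) \<le> (2 * (791/500)) * (1 / (414/1000))"
    using t by (intro mult_left_mono divide_left_mono) auto
  finally show ?thesis by simp
qed

lemma ln_two_power_ge: "real k * (2/3) \<le> ln ((2::real) ^ k)"
proof -
  have "real k * (2/3) \<le> real k * ln 2" using ln2_ge_two_thirds by (intro mult_left_mono) auto
  then show ?thesis by (simp add: ln_realpow)
qed

lemma exists_depth_dim1:
  assumes "n \<ge> 1"
  shows "\<exists>K. min 1 (chaining_bound 1 n K) \<le> complexity_rate 1 n"
proof -
  define s where "s = sqrt n"
  have s: "s \<ge> 1" "ln (2 * s) \<ge> ln 2" using assms by (simp_all add: s_def)
  have rate: "complexity_rate 1 n = 9 * sqrt (ln (2 * s)) / s" by (simp add: complexity_rate_def s_def)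
  show ?thesis
  proof (cases "n \<le> 3")
    case True
    then have "s \<le> 2" by (simp add: s_def real_sqrt_le_iff')
    moreover have "4/5 \<le> sqrt (ln (2 * s))"
    proof (rule real_le_rsqrt)
      have "(4/5 :: real)\<^sup>2 \<le> 2/3" by (simp add: power2_eq_square)
      then show "(4/5)\<^sup>2 \<le> ln (2 * s)" using s(2) ln2_ge_two_thirds by linarith
    qed
    ultimately have "1 \<le> complexity_rate 1 n" unfolding rate using s by (simp add: field_simps)
    then show ?thesis by (intro exI[of _ 0]) simp
  next
    case False
    have "s \<le> n" using assms by (simp add: s_def real_sqrt_le_iff' power2_eq_square)
    also have "real n \<le> 2 ^ n" by (metis less_exp less_imp_le of_nat_le_iff of_nat_numeral of_nat_power)
    finally have "chaining_bound 1 n n \<le> 1 / s + (7643/1000) / s + 1 / s"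
      unfolding chaining_bound_def s_def[symmetric] using chaining_sum_dim1_le s
      by (intro add_mono divide_right_mono divide_left_mono) auto
    also have "\<dots> \<le> 9 * (108/100) / s" using s by (simp add: field_simps)
    also have "\<dots> \<le> complexity_rate 1 n"
    proof -
      have "s \<ge> 2" using False by (simp add: s_def real_le_rsqrt)
      then have "ln (2 * s) \<ge> ln (2 ^ 2)" using s by (subst ln_le_cancel_iff) auto
      moreover have "(108/100 :: real)\<^sup>2 \<le> 2 * (2/3)" by (simp add: power2_eq_square)
      ultimately have "ln (2 * s) \<ge> (108/100)\<^sup>2" using ln_two_power_ge[of 2] by linarith
      then show ?thesis unfolding rate using s by (intro divide_right_mono mult_left_mono real_le_rsqrt) auto
    qed
    finally show ?thesis by (intro exI[of _ n] min.coboundedI2)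
  qed
qed

lemma chaining_sum_dim2_le: "(\<Sum>k\<in>{1..K}. 2 / 2 ^ k * sqrt ((1 + 2 ^ (k + 1)) ^ 2)) \<le> (5 * K :: real)"
proof -
  have "2 / 2 ^ k * sqrt ((1 + 2 ^ (k + 1)) ^ 2) \<le> (5::real)" if "k \<ge> 1" for k :: nat
  proof -
    have "(2::real) ^ k \<ge> 2" using that by (metis power_one_right power_increasing one_le_numeral)
    then show ?thesis by (simp add: field_simps)
  qed
  then have "(\<Sum>k\<in>{1..K}. 2 / 2 ^ k * sqrt ((1 + 2 ^ (k + 1)) ^ 2)) \<le> (\<Sum>k\<in>{1..K}. (5::real))"
    by (intro sum_mono) simp
  then show ?thesis by simp
qed

lemma ln_2_powr_three_halves_ge: "4/9 \<le> ln (2::real) powr (3/2)"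
proof -
  have "ln (2::real) powr (3/2) = ln 2 powr (1 + 1/2)" by simp
  also have "\<dots> = ln 2 * ln 2 powr (1/2)" using ln2_ge_two_thirds by (subst powr_add) simp
  also have "\<dots> = ln 2 * sqrt (ln 2)" using ln2_ge_two_thirds by (simp add: powr_half_sqrt)
  also have "\<dots> \<ge> (2/3) * (2/3)"
    using ln2_ge_two_thirds by (intro mult_mono real_le_rsqrt) (auto simp: power2_eq_square)
  finally show ?thesis by simp
qed

lemma ceiling_log2_le_ln_powr:
  fixes s :: real assumes "s \<ge> sqrt 2"
  shows "2 + 5 * real (nat \<lceil>log 2 s\<rceil>) \<le> 10 * ln (2 * s) powr (3/2)"
proof -
  have "sqrt 2 > (1::real)" by simp
  then have s: "s > 1" using assms by linarith
  have "ln s \<ge> ln (sqrt 2)" using assms s by (subst ln_le_cancel_iff) auto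
  then have ln_s: "ln s \<ge> 1/3" using ln2_ge_two_thirds by (simp add: ln_sqrt)
  define L where "L = ln (2 * s)"
  have L: "L = ln 2 + ln s" using s by (simp add: L_def ln_mult)
  have "log 2 s \<le> (3/2) * ln s"
    using ln2_ge_two_thirds ln_s by (simp add: log_def divide_le_eq mult_left_mono)
  moreover have "real (nat \<lceil>log 2 s\<rceil>) \<le> log 2 s + 1" using s by simp
  ultimately have "2 + 5 * real (nat \<lceil>log 2 s\<rceil>) \<le> 10 * L" using L ln_s ln2_ge_two_thirds by linarith
  also have "L \<le> L powr (3/2)"
  proof -
    have "L \<ge> 1" using L ln_s ln2_ge_two_thirds by linarith
    then have "L powr 1 \<le> L powr (3/2)" by (intro powr_mono) auto
    then show ?thesis using \<open>L \<ge> 1\<close> by simp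
  qed
  finally show ?thesis by (simp add: L_def)
qed

lemma exists_depth_dim2:
  assumes "n \<ge> 1"
  shows "\<exists>K. min 1 (chaining_bound 2 n K) \<le> complexity_rate 2 n"
proof -
  define s where "s = sqrt n"
  have s: "s \<ge> 1" using assms by (simp add: s_def)
  have rate: "complexity_rate 2 n = 10 * ln (2 * s) powr (3/2) / s" by (simp add: complexity_rate_def s_def)
  show ?thesis
  proof (cases "n = 1")
    case True
    then have "1 \<le> complexity_rate 2 n" using ln_2_powr_three_halves_ge unfolding rate by (simp add: s_def)
    then show ?thesis by (intro exI[of _ 0]) simp
  next
    case False
    then have "s \<ge> sqrt 2" using assms by (simp add: s_def)
    define K where "K = nat \<lceil>log 2 s\<rceil>"
    have "real K \<ge> log 2 s" using s by (simp add: K_def)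
    have "s = 2 powr (log 2 s)" using s by simp
    also have "\<dots> \<le> 2 ^ K" using \<open>real K \<ge> log 2 s\<close> by (simp add: powr_realpow[symmetric])
    finally have "chaining_bound 2 n K \<le> 1 / s + (5 * real K) / s + 1 / s"
      unfolding chaining_bound_def s_def[symmetric] using chaining_sum_dim2_le s
      by (intro add_mono divide_right_mono divide_left_mono) auto
    also have "\<dots> = (2 + 5 * real K) / s" using s by (simp add: field_simps)
    also have "\<dots> \<le> complexity_rate 2 n"
      unfolding rate K_def using ceiling_log2_le_ln_powr[OF \<open>s \<ge> sqrt 2\<close>] s by (intro divide_right_mono) auto
    finally show ?thesis by (intro exI[of _ K] min.coboundedI2)
  qed
qed

lemma powr_power_commute: "(x::real) > 0 \<Longrightarrow> (x ^ k) powr b = (x powr b) ^ k"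
  by (simp add: powr_realpow[symmetric] powr_powr mult.commute)

lemma powr_mult_two_power:
  fixes c q :: real
  shows "(c * 2 ^ k) powr q = c powr q * (2 powr q) ^ k"
  by (simp add: powr_mult powr_power_commute)

lemma chaining_term_le:
  assumes "k \<ge> 1"
  shows "2 / 2 ^ k * sqrt ((1 + 2 ^ (k + 1)) ^ d)
           \<le> 5 * (5/2) powr (real d / 2 - 1) * (2 powr (real d / 2 - 1)) ^ k"
proof -
  define q where "q = real d / 2 - 1"
  have "(2::real) ^ k \<ge> 2" using assms by (metis power_one_right power_increasing one_le_numeral)
  then have "1 + 2 ^ (k + 1) \<le> (5/2) * (2::real) ^ k" by simp
  have "sqrt ((1 + 2 ^ (k + 1)) ^ d) = (1 + 2 ^ (k + 1)) powr (1 + q)"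
    by (simp add: q_def powr_realpow[symmetric] powr_half_sqrt[symmetric] powr_powr add_pos_pos)
  also have "\<dots> \<le> ((5/2) * 2 ^ k) powr (1 + q)"
    using \<open>1 + 2 ^ (k + 1) \<le> (5/2) * 2 ^ k\<close> by (intro powr_mono2) (auto simp: q_def)
  also have "\<dots> = (5/2) powr (1 + q) * (2 powr (1 + q)) ^ k"
    by (rule powr_mult_two_power)
  also have "\<dots> = (5/2) * (5/2) powr q * (2 * 2 powr q) ^ k"
    by (simp add: powr_add)
  finally have "2 / 2 ^ k * sqrt ((1 + 2 ^ (k + 1)) ^ d) \<le> 2 / 2 ^ k * ((5/2) * (5/2) powr q * (2 * 2 powr q) ^ k)"
    by (intro mult_left_mono) auto
  also have "\<dots> = 5 * (5/2) powr q * (2 powr q) ^ k"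
    by (simp add: power_mult_distrib field_simps)
  finally show ?thesis by (simp add: q_def)
qed

lemma chaining_sum_dim_ge3_le:
  assumes "d \<ge> 3" "5 * 2 ^ K \<le> M"
  shows "(\<Sum>k\<in>{1..K}. 2 / 2 ^ k * sqrt ((1 + 2 ^ (k + 1)) ^ d))
           \<le> 5 * M powr (real d / 2 - 1) / (2 powr (real d / 2 - 1) - 1)"
proof -
  define q where "q = real d / 2 - 1"
  define r where "r = (2::real) powr q"
  have q: "q > 0" using assms(1) by (simp add: q_def)
  then have r: "r > 1" by (simp add: r_def)
  have "(\<Sum>k\<in>{1..K}. 2 / 2 ^ k * sqrt ((1 + 2 ^ (k + 1)) ^ d)) \<le> (\<Sum>k\<in>{1..K}. 5 * (5/2) powr q * r ^ k)"
    unfolding q_def r_def by (intro sum_mono chaining_term_le) simp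
  also have "\<dots> \<le> 5 * (5/2) powr q * (r ^ (K + 1) / (r - 1))"
    unfolding sum_distrib_left[symmetric] using r by (intro mult_left_mono sum_power_atLeast1_le_gt1) auto
  also have "\<dots> = 5 * ((5/2) powr q * r ^ (K + 1)) / (r - 1)" by simp
  also have "\<dots> \<le> 5 * M powr q / (r - 1)"
  proof -
    have "((5/2) * 2 ^ K) powr q = (5/2) powr q * r ^ K"
      unfolding r_def by (rule powr_mult_two_power)
    then have "(5/2) powr q * r ^ (K + 1) = r * ((5/2) * 2 ^ K) powr q" by simp
    also have "\<dots> \<le> r * (M / 2) powr q"
      using assms(2) q r by (intro mult_left_mono powr_mono2) auto
    also have "\<dots> = M powr q"
      using assms(2) by (simp add: r_def powr_divide)
    finally show ?thesis using r by (intro divide_right_mono) auto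
  qed
  finally show ?thesis by (simp add: q_def r_def)
qed

lemma le_ten_sqrt_ln_double:
  fixes M :: real assumes "3/5 \<le> M" "M \<le> 16"
  shows "M \<le> 10 * sqrt (ln (2 * M))"
proof -
  consider "M \<le> 1" | "1 \<le> M" "M \<le> 8" | "8 \<le> M" by linarith
  then show ?thesis
  proof cases
    case 1
    have "ln (1 / (2 * M)) \<le> 1 / (2 * M) - 1" using assms by (intro ln_le_minus_one) auto
    moreover have "1 / (2 * M) \<le> 5/6" using assms by (simp add: field_simps)
    ultimately have "(2/5)\<^sup>2 \<le> ln (2 * M)" using assms by (simp add: ln_div power2_eq_square)
    then show ?thesis using 1 real_le_rsqrt by fastforce
  next
    case 2
    then have "ln (2 ^ 1) \<le> ln (2 * M)" by (subst ln_le_cancel_iff) auto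
    then have "(4/5)\<^sup>2 \<le> ln (2 * M)" using ln_two_power_ge[of 1] by (simp add: power2_eq_square)
    then show ?thesis using 2 real_le_rsqrt by fastforce
  next
    case 3
    then have "ln (2 ^ 4) \<le> ln (2 * M)" by (subst ln_le_cancel_iff) auto
    then have "(8/5)\<^sup>2 \<le> ln (2 * M)" using ln_two_power_ge[of 4] by (simp add: power2_eq_square)
    then show ?thesis using assms real_le_rsqrt by fastforce
  qed
qed

lemma dim_ge3_scale:
  assumes "d \<ge> 3" "n \<ge> 1"
  defines "q \<equiv> real d / 2 - 1"
  defines "M \<equiv> real n powr (1 / real d) * q powr (2 / real d)"
  shows "M \<ge> 3/5" and "sqrt n * q = M * M powr q"
proof -
  have q: "q \<ge> 1/2" using assms(1) by (simp add: q_def)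
  have "q powr (2 / real d) \<ge> 3/5"
  proof (cases "d = 3")
    case True
    have "((1/2 :: real) powr (2/3)) ^ 3 = (1/2) powr (2/3 * real 3)"
      by (simp add: powr_realpow[symmetric] powr_powr del: of_nat_numeral)
    also have "\<dots> = 1/4" by (simp add: powr_numeral power2_eq_square)
    finally have "(3/5 :: real) ^ 3 \<le> ((1/2) powr (2/3)) ^ 3" by (simp add: power3_eq_cube)
    then have "3/5 \<le> (1/2 :: real) powr (2/3)"
      using power_le_imp_le_base[of "3/5" 2 "(1/2 :: real) powr (2/3)"] by (simp add: numeral_3_eq_3)
    then show ?thesis using True by (simp add: q_def)
  next
    case False
    then have "q \<ge> 1" using assms(1) by (simp add: q_def)
    then have "q powr (2 / real d) \<ge> 1" by (intro ge_one_powr_ge_zero) auto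
    then show ?thesis by simp
  qed
  moreover have "real n powr (1 / real d) \<ge> 1" using assms(2) by (intro ge_one_powr_ge_zero) auto
  ultimately show M: "M \<ge> 3/5" unfolding M_def using mult_mono[of 1 _ "3/5"] by force
  have "M powr (1 + q) = (real n powr (1 / real d)) powr (1 + q) * (q powr (2 / real d)) powr (1 + q)"
    unfolding M_def by (rule powr_mult)
  also have "\<dots> = sqrt n * q"
    using assms(1) q by (simp add: powr_powr q_def powr_half_sqrt)
  finally show "sqrt n * q = M * M powr q" using M by (simp add: powr_add)
qed

lemma dyadic_floor_log_bounds:
  fixes x :: real assumes "x \<ge> 1"
  shows "2 ^ nat \<lfloor>log 2 x\<rfloor> \<le> x" and "x < 2 * 2 ^ nat \<lfloor>log 2 x\<rfloor>"
proof -
  define K where "K = nat \<lfloor>log 2 x\<rfloor>"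
  have K: "real K \<le> log 2 x" "log 2 x < real K + 1" using assms by (simp_all add: K_def)
  have "(2::real) ^ K \<le> 2 powr log 2 x" using K by (simp add: powr_realpow[symmetric])
  then show "2 ^ nat \<lfloor>log 2 x\<rfloor> \<le> x" using assms by (simp add: K_def)
  have "x = 2 powr log 2 x" using assms by simp
  also have "\<dots> < 2 powr (real K + 1)" using K by (intro powr_less_mono) auto
  finally show "x < 2 * 2 ^ nat \<lfloor>log 2 x\<rfloor>" by (simp add: K_def powr_add powr_realpow)
qed

lemma one_plus_mult_ln_le_powr: "(x::real) > 0 \<Longrightarrow> 1 + q * ln x \<le> x powr q"
  using exp_ge_add_one_self[of "q * ln x"] by (simp add: powr_def)

lemma chaining_bound_dim_ge3_le:
  assumes "d \<ge> 3" "n \<ge> 1"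
  defines "q \<equiv> real d / 2 - 1"
  defines "M \<equiv> real n powr (1 / real d) * q powr (2 / real d)"
  assumes "M \<ge> 16"
  shows "chaining_bound d n (nat \<lfloor>log 2 (M / 5)\<rfloor>) \<le> 18 / M"
proof -
  define K where "K = nat \<lfloor>log 2 (M / 5)\<rfloor>"
  define s where "s = sqrt n"
  define r where "r = (2::real) powr q"
  have q: "q \<ge> 1/2" using assms(1) by (simp add: q_def)
  have sM: "s * q = M * M powr q" using dim_ge3_scale(2)[OF assms(1,2)] by (simp add: s_def q_def M_def)
  have M: "M > 0" using assms(5) by simp
  have K: "5 * 2 ^ K \<le> M" "M < 10 * 2 ^ K"
    using dyadic_floor_log_bounds[of "M / 5"] assms(5) by (simp_all add: K_def)
  have "ln (2 ^ 4) \<le> ln M" using assms(5) by (subst ln_le_cancel_iff) auto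
  then have "q * 2 \<le> q * ln M" using ln_two_power_ge[of 4] q by (intro mult_left_mono) auto
  then have "M powr q \<ge> 2 * q" using one_plus_mult_ln_le_powr[OF M, of q] by linarith
  then have "(2 * M) * q \<le> s * q" using sM M by (simp add: mult_left_mono mult.assoc[symmetric])
  then have s: "s \<ge> 2 * M" using q by simp
  have "q * (2/3) \<le> q * ln 2" using ln2_ge_two_thirds q by (intro mult_left_mono) auto
  then have r: "r - 1 \<ge> q * (2/3)" using one_plus_mult_ln_le_powr[of 2 q] by (simp add: r_def)
  have "(\<Sum>k\<in>{1..K}. 2 / 2 ^ k * sqrt ((1 + 2 ^ (k + 1)) ^ d)) / s \<le> (5 * M powr q / (r - 1)) / s"
    using chaining_sum_dim_ge3_le[OF assms(1) K(1)] s M by (intro divide_right_mono) (auto simp: q_def r_def)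
  also have "\<dots> = 5 * q / ((r - 1) * M)"
  proof -
    have s_eq: "s = M * M powr q / q" using sM q by (simp add: field_simps)
    have "r - 1 \<noteq> 0" "M powr q \<noteq> 0" using r q M by auto
    then show ?thesis unfolding s_eq using q M by (simp add: field_simps)
  qed
  also have "\<dots> \<le> 5 * q / (q * (2/3) * M)"
    using r q M by (intro divide_left_mono mult_right_mono mult_pos_pos) auto
  also have "\<dots> = (15/2) / M" using q by (simp add: field_simps)
  finally have "chaining_bound d n K \<le> (1/2) / M + (15/2) / M + 10 / M"
    unfolding chaining_bound_def s_def[symmetric] using s M K(2)
    by (intro add_mono) (auto simp: field_simps)
  then show ?thesis by (simp add: K_def)
qed

lemma exists_depth_dim_ge3:
  assumes "d \<ge> 3" "n \<ge> 1"
  shows "\<exists>K. min 1 (chaining_bound d n K) \<le> complexity_rate d n"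
proof -
  define M where "M = real n powr (1 / real d) * (real d / 2 - 1) powr (2 / real d)"
  have M: "M \<ge> 3/5" using dim_ge3_scale(1)[OF assms] by (simp add: M_def)
  have rate: "complexity_rate d n = 10 * sqrt (ln (2 * M)) / M"
    using assms(1) by (simp add: complexity_rate_def M_def mult.assoc)
  show ?thesis
  proof (cases "M \<le> 16")
    case True
    then have "1 \<le> complexity_rate d n"
      using le_ten_sqrt_ln_double[OF M] M unfolding rate by (simp add: field_simps)
    then show ?thesis by (intro exI[of _ 0]) simp
  next
    case False
    have "ln (2 ^ 5) \<le> ln (2 * M)" using False by (subst ln_le_cancel_iff) auto
    then have "(9/5)\<^sup>2 \<le> ln (2 * M)" using ln_two_power_ge[of 5] by (simp add: power2_eq_square)
    then have "18 / M \<le> complexity_rate d n"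
      unfolding rate using M by (intro divide_right_mono) (auto dest: real_le_rsqrt)
    moreover have "chaining_bound d n (nat \<lfloor>log 2 (M / 5)\<rfloor>) \<le> 18 / M"
      using chaining_bound_dim_ge3_le[OF assms] False unfolding M_def by simp
    ultimately have "min 1 (chaining_bound d n (nat \<lfloor>log 2 (M / 5)\<rfloor>)) \<le> complexity_rate d n"
      by (intro min.coboundedI2) (rule order.trans)
    then show ?thesis ..
  qed
qed

lemma exists_chaining_depth:
  assumes "d \<ge> 1" "n \<ge> 1"
  shows "\<exists>K. min 1 (chaining_bound d n K) \<le> complexity_rate d n"
proof -
  consider "d = 1" | "d = 2" | "d \<ge> 3" using assms(1) by linarith
  then show ?thesis
    using exists_depth_dim1 exists_depth_dim2 exists_depth_dim_ge3 assms(2) by cases auto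
qed

lemma nn_integral_sup_F_BL_le_min:
  fixes \<Omega> :: "'a::euclidean_space set"
  assumes "bounded \<Omega>" "diameter \<Omega> \<le> D" "n \<ge> 1" "\<And>i. i < n \<Longrightarrow> z i \<in> \<Omega>"
  shows "(\<integral>\<^sup>+x. (SUP f\<in>F_BL \<Omega>. ennreal (\<bar>\<Sum>i<n. x i * f (z i)\<bar> / n)) \<partial>gauss_vec n)
           \<le> ennreal (D * min 1 (chaining_bound DIM('a) n K))"
proof (cases "D > 0 \<and> chaining_bound DIM('a) n K < 1")
  case True
  then show ?thesis
    using nn_integral_sup_F_BL_le_chaining_bound[where z = z and n = n, OF assms(1,2) _ assms(3,4)] by simp
next
  case False
  moreover have "D \<ge> 0" using diameter_ge_0[OF assms(1)] assms(2) by linarith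
  ultimately have "D * min 1 (chaining_bound DIM('a) n K) = D" by auto
  then show ?thesis using nn_integral_sup_F_BL_le_diameter[where z = z and n = n, OF assms(1,2,4)] by metis
qed

theorem mainTheorem9:
  fixes \<Omega> :: "'a::euclidean_space set" and D :: real and n :: nat
  assumes "bounded \<Omega>" and "diameter \<Omega> \<le> D" and "n \<ge> 1"
  shows "gaussian_complexity n (F_BL \<Omega>) \<Omega> \<le> ennreal
    (if DIM('a) = 1 then 9 * sqrt (ln (2 * sqrt n)) * D / sqrt n
     else if DIM('a) = 2 then 10 * D * ln (2 * sqrt n) powr (3/2) / sqrt n
     else 10 * D * sqrt (ln (2 * real n powr (1 / real DIM('a)) * (real DIM('a) / 2 - 1) powr (2 / real DIM('a))))
          / (real n powr (1 / real DIM('a)) * (real DIM('a) / 2 - 1) powr (2 / real DIM('a))))"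
proof -
  obtain K where K: "min 1 (chaining_bound DIM('a) n K) \<le> complexity_rate DIM('a) n"
    using exists_chaining_depth[of "DIM('a)" n] assms(3) by (auto simp: Suc_le_eq)
  have "D \<ge> 0" using diameter_ge_0[OF assms(1)] assms(2) by linarith
  have rate: "(if DIM('a) = 1 then 9 * sqrt (ln (2 * sqrt n)) * D / sqrt n
     else if DIM('a) = 2 then 10 * D * ln (2 * sqrt n) powr (3/2) / sqrt n
     else 10 * D * sqrt (ln (2 * real n powr (1 / real DIM('a)) * (real DIM('a) / 2 - 1) powr (2 / real DIM('a))))
          / (real n powr (1 / real DIM('a)) * (real DIM('a) / 2 - 1) powr (2 / real DIM('a))))
     = D * complexity_rate DIM('a) n"
    by (simp add: complexity_rate_def)
  show ?thesis
    unfolding rate gaussian_complexity_def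
  proof (rule SUP_least)
    fix z assume "z \<in> {..<n} \<rightarrow>\<^sub>E \<Omega>"
    then have "(\<integral>\<^sup>+x. (SUP f\<in>F_BL \<Omega>. ennreal (\<bar>\<Sum>i<n. x i * f (z i)\<bar> / n)) \<partial>gauss_vec n)
        \<le> ennreal (D * min 1 (chaining_bound DIM('a) n K))"
      using assms by (intro nn_integral_sup_F_BL_le_min) auto
    also have "\<dots> \<le> ennreal (D * complexity_rate DIM('a) n)"
      using K \<open>D \<ge> 0\<close> by (intro ennreal_leI mult_left_mono)
    finally show "(\<integral>\<^sup>+x. (SUP f\<in>F_BL \<Omega>. ennreal (\<bar>\<Sum>i<n. x i * f (z i)\<bar> / n)) \<partial>gauss_vec n)
        \<le> ennreal (D * complexity_rate DIM('a) n)" .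
  qed
qed

end
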